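(* Let $G$ be a connected (claw, bull)-free graph and let $C$ be an induced cycle of $G$ of length at least $4$. Then $N[C]=V(G)$, i.e. every vertex of $G$ lies on $C$ or is adjacent to a vertex of $C$.
   Context: A claw is a graph isomorphic to $K_{1,3}$; a bull is the graph obtained from a triangle by adding two pendant edges at two different vertices. A graph is (claw, bull)-free if it has no induced claw and no induced bull. $N[C]$ denotes $V(C)\cup N(V(C))$, where $N(X)=\big(\bigcup_{x\in X}N(x)\big)\setminus X$. *)

theory Defs
  imports Main
begin

definition simple_graph :: "'a set \<Rightarrow> ('a \<Rightarrow> 'a \<Rightarrow> bool) \<Rightarrow> bool" where
  "simple_graph V E \<longleftrightarrow> finite V \<and> (\<forall>x y. E x y \<longrightarrow> x \<in> V \<and> y \<in> V) \<and>
     (\<forall>x y. E x y \<longrightarrow> E y x) \<and> (\<forall>x. \<not> E x x)"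

definition connected_graph :: "'a set \<Rightarrow> ('a \<Rightarrow> 'a \<Rightarrow> bool) \<Rightarrow> bool" where
  "connected_graph V E \<longleftrightarrow> V \<noteq> {} \<and> (\<forall>x\<in>V. \<forall>y\<in>V. E\<^sup>*\<^sup>* x y)"

definition has_induced_claw :: "'a set \<Rightarrow> ('a \<Rightarrow> 'a \<Rightarrow> bool) \<Rightarrow> bool" where
  "has_induced_claw V E \<longleftrightarrow> (\<exists>a\<in>V. \<exists>b\<in>V. \<exists>c\<in>V. \<exists>d\<in>V.
     distinct [a, b, c, d] \<and> E a b \<and> E a c \<and> E a d \<and>
     \<not> E b c \<and> \<not> E b d \<and> \<not> E c d)"

definition has_induced_bull :: "'a set \<Rightarrow> ('a \<Rightarrow> 'a \<Rightarrow> bool) \<Rightarrow> bool" where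
  "has_induced_bull V E \<longleftrightarrow> (\<exists>x\<in>V. \<exists>y\<in>V. \<exists>z\<in>V. \<exists>u\<in>V. \<exists>w\<in>V.
     distinct [x, y, z, u, w] \<and> E x y \<and> E y z \<and> E x z \<and> E u x \<and> E w y \<and>
     \<not> E u y \<and> \<not> E u z \<and> \<not> E u w \<and> \<not> E w x \<and> \<not> E w z)"

definition claw_bull_free :: "'a set \<Rightarrow> ('a \<Rightarrow> 'a \<Rightarrow> bool) \<Rightarrow> bool" where
  "claw_bull_free V E \<longleftrightarrow> \<not> has_induced_claw V E \<and> \<not> has_induced_bull V E"

definition induced_cycle :: "'a set \<Rightarrow> ('a \<Rightarrow> 'a \<Rightarrow> bool) \<Rightarrow> 'a list \<Rightarrow> bool" where
  "induced_cycle V E cs \<longleftrightarrow> length cs \<ge> 3 \<and> distinct cs \<and> set cs \<subseteq> V \<and>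
     (\<forall>i<length cs. \<forall>j<length cs.
        E (cs ! i) (cs ! j) \<longleftrightarrow> (j = Suc i mod length cs \<or> i = Suc j mod length cs))"

definition closed_nbhd :: "('a \<Rightarrow> 'a \<Rightarrow> bool) \<Rightarrow> 'a set \<Rightarrow> 'a set" where
  "closed_nbhd E X = X \<union> {v. \<exists>x\<in>X. E x v}"

end

theory Submission
  imports Defs
begin

text \<open>Let \<open>u\<close> be a neighbour of a cycle vertex \<open>b\<close> and let \<open>a\<close>, \<open>c\<close> be the cycle
  neighbours of \<open>b\<close>; as the cycle is induced and has length at least 4, \<open>a b c\<close> is an
  induced path. Any neighbour \<open>v\<close> of \<open>u\<close> missing \<open>a\<close>, \<open>b\<close> and \<open>c\<close> would create an induced
  claw (centred at \<open>u\<close> if \<open>u\<close> sees both \<open>a\<close> and \<open>c\<close>, at \<open>b\<close> if it sees neither) or an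
  induced bull (triangle \<open>u b a\<close> with pendants \<open>v\<close> and \<open>c\<close>, or symmetrically). Hence
  \<open>N[C]\<close> is closed under taking neighbours, and connectivity gives \<open>N[C] = V\<close>.\<close>

lemma claw_bull_free_no_claw:
  assumes "claw_bull_free V E" "{a, b, c, d} \<subseteq> V" "distinct [a, b, c, d]"
    and "E a b" "E a c" "E a d" "\<not> E b c" "\<not> E b d" "\<not> E c d"
  shows False
  using assms unfolding claw_bull_free_def has_induced_claw_def by blast

lemma claw_bull_free_no_bull:
  assumes "claw_bull_free V E" "{x, y, z, u, w} \<subseteq> V" "distinct [x, y, z, u, w]"
    and "E x y" "E y z" "E x z" "E u x" "E w y"
    and "\<not> E u y" "\<not> E u z" "\<not> E u w" "\<not> E w x" "\<not> E w z"
  shows False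
  using assms unfolding claw_bull_free_def has_induced_bull_def by blast

lemma claw_bull_free_induced_path_dominates:
  assumes graph: "simple_graph V E" and free: "claw_bull_free V E"
    and path: "E a b" "E b c" "\<not> E a c" "a \<noteq> c"
    and "E b u" "E u v"
  shows "E a v \<or> E b v \<or> E c v"
proof (rule ccontr)
  assume "\<not> (E a v \<or> E b v \<or> E c v)"
  then have far: "\<not> E v a" "\<not> E v b" "\<not> E v c" "\<not> E a v" "\<not> E b v" "\<not> E c v"
    using graph unfolding simple_graph_def by blast+
  have sym: "E x y \<Longrightarrow> E y x" and irrefl: "\<not> E x x" and in_V: "E x y \<Longrightarrow> x \<in> V \<and> y \<in> V"
    for x y using graph unfolding simple_graph_def by blast+
  have edges: "E b a" "E c b" "E u b" "E v u" "\<not> E c a"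
    using path \<open>E b u\<close> \<open>E u v\<close> sym by blast+
  have vertices: "{a, b, c, u, v} \<subseteq> V"
    using path \<open>E b u\<close> \<open>E u v\<close> in_V by blast
  have distinct: "distinct [a, b, c, u, v]"
    using path \<open>E b u\<close> \<open>E u v\<close> far edges irrefl by auto
  consider "E u a" "E u c" | "E u a" "\<not> E u c" | "\<not> E u a" "E u c" | "\<not> E u a" "\<not> E u c"
    by blast
  then show False
  proof cases
    case 1
    then show False
      using claw_bull_free_no_claw[OF free, of u a c v] vertices distinct path far \<open>E u v\<close> by auto
  next
    case 2
    then show False
      using claw_bull_free_no_bull[OF free, of u b a v c] vertices distinct path far edges sym
      by auto
  next
    case 3
    then show False
      using claw_bull_free_no_bull[OF free, of u b c v a] vertices distinct path far edges sym
      by auto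
  next
    case 4
    then show False
      using claw_bull_free_no_claw[OF free, of b a c u] vertices distinct path edges sym by auto
  qed
qed

lemma induced_cycle_vertex_induced_path:
  assumes cycle: "induced_cycle V E C" and long: "length C \<ge> 4" and "b \<in> set C"
  obtains a c where "a \<in> set C" "c \<in> set C" "E a b" "E b c" "\<not> E a c" "a \<noteq> c"
proof -
  define k where "k = length C"
  obtain i where i: "i < k" "b = C ! i"
    using \<open>b \<in> set C\<close> unfolding k_def by (metis in_set_conv_nth)
  define p where "p = (if i = 0 then k - 1 else i - 1)"
  define s where "s = (if Suc i = k then 0 else Suc i)"
  have indices: "p < k" "s < k" "Suc p mod k = i" "Suc i mod k = s"
    "s \<noteq> i" "p \<noteq> Suc s mod k" "p \<noteq> s"
    using i(1) long unfolding p_def s_def k_def by (auto simp: mod_Suc)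
  have adj: "E (C ! x) (C ! y) \<longleftrightarrow> y = Suc x mod k \<or> x = Suc y mod k" if "x < k" "y < k" for x y
    using cycle that unfolding induced_cycle_def k_def by blast
  have "distinct C"
    using cycle unfolding induced_cycle_def by blast
  then have "C ! p \<noteq> C ! s"
    using indices unfolding k_def by (simp add: nth_eq_iff_index_eq)
  moreover have "E (C ! p) b" "E b (C ! s)" "\<not> E (C ! p) (C ! s)"
    using adj indices i by auto
  moreover have "C ! p \<in> set C" "C ! s \<in> set C"
    using indices unfolding k_def by auto
  ultimately show thesis
    using that by blast
qed

lemma connected_graph_closed_subset_eq:
  assumes "connected_graph V E" "S \<subseteq> V" "S \<noteq> {}"
    and closed: "\<And>x y. x \<in> S \<Longrightarrow> E x y \<Longrightarrow> y \<in> S"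
  shows "S = V"
proof
  obtain x where "x \<in> S"
    using \<open>S \<noteq> {}\<close> by blast
  show "V \<subseteq> S"
  proof
    fix y assume "y \<in> V"
    then have "E\<^sup>*\<^sup>* x y"
      using assms(1,2) \<open>x \<in> S\<close> unfolding connected_graph_def by blast
    then show "y \<in> S"
      using \<open>x \<in> S\<close> closed by (induction rule: rtranclp_induct) blast+
  qed
qed (fact \<open>S \<subseteq> V\<close>)

theorem lemma3:
  fixes V :: "'a set" and E :: "'a \<Rightarrow> 'a \<Rightarrow> bool" and C :: "'a list"
  assumes "simple_graph V E"
    and "connected_graph V E"
    and "claw_bull_free V E"
    and "induced_cycle V E C"
    and "length C \<ge> 4"
  shows "closed_nbhd E (set C) = V"
proof (rule connected_graph_closed_subset_eq[OF assms(2)])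
  show "closed_nbhd E (set C) \<subseteq> V" "closed_nbhd E (set C) \<noteq> {}"
    using assms(1,4,5) unfolding closed_nbhd_def simple_graph_def induced_cycle_def by auto
next
  fix u v assume "u \<in> closed_nbhd E (set C)" "E u v"
  then obtain b where "b \<in> set C" "b = u \<or> E b u"
    unfolding closed_nbhd_def by blast
  moreover obtain a c where "a \<in> set C" "c \<in> set C" "E a b" "E b c" "\<not> E a c" "a \<noteq> c"
    using induced_cycle_vertex_induced_path[OF assms(4,5) \<open>b \<in> set C\<close>] .
  ultimately have "\<exists>x \<in> set C. E x v"
    using claw_bull_free_induced_path_dominates[OF assms(1,3)] \<open>E u v\<close> by blast
  then show "v \<in> closed_nbhd E (set C)"
    unfolding closed_nbhd_def by blast
qed

end
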